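(* Let $(X,d,\mathfrak{m},p)$ be a pointed metric measure space, and assume that for each $R>r>0$ there is $C(R,r)>0$ such that $\mathfrak{m}(B_x(R,X))\leq C(R,r)\cdot\mathfrak{m}(B_x(r,X))$ for every $x\in X$. Then for each $[a,b]\subset(0,\infty)$, any discrete group $\Gamma\leq\mathrm{Iso}(X)$ and any short basis $\beta\subset\Gamma$ with respect to $p$, there are at most $C(3b,a/2)$ elements of $\beta$ with norm $\|\cdot\|_p$ in $[a,b]$.
   Context: For $g\in\Gamma$, $\|g\|_p:=d(gp,p)$. A short basis of $\Gamma$ with respect to $p$ is a countable collection $\{\gamma_1,\gamma_2,\dots\}\subset\Gamma$ such that each $\gamma_{j+1}$ is an element of minimal norm in $\Gamma\setminus\langle\gamma_1,\dots,\gamma_j\rangle$. *)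

theory Defs
  imports "HOL-Analysis.Analysis"
begin

definition isometry :: "('a::metric_space \<Rightarrow> 'a) \<Rightarrow> bool" where
  "isometry g \<longleftrightarrow> (\<forall>x y. dist (g x) (g y) = dist x y) \<and> surj g"

definition iso_subgroup :: "('a::metric_space \<Rightarrow> 'a) set \<Rightarrow> bool" where
  "iso_subgroup G \<longleftrightarrow> (\<forall>g\<in>G. isometry g) \<and> id \<in> G \<and>
     (\<forall>g\<in>G. \<forall>h\<in>G. g \<circ> h \<in> G) \<and> (\<forall>g\<in>G. inv g \<in> G)"

definition gen_subgroup :: "('a::metric_space \<Rightarrow> 'a) set \<Rightarrow> ('a \<Rightarrow> 'a) set" where
  "gen_subgroup S = \<Inter>{H. iso_subgroup H \<and> S \<subseteq> H}"

text \<open>Discreteness of a subgroup of Iso(X) in the compact-open topology: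
  every element has a basic compact-open neighbourhood
  {h. sup over K of dist (h x) (g x) < e} containing no other element.\<close>
definition discrete_iso_subgroup :: "('a::metric_space \<Rightarrow> 'a) set \<Rightarrow> bool" where
  "discrete_iso_subgroup G \<longleftrightarrow> iso_subgroup G \<and>
     (\<forall>g\<in>G. \<exists>K e. compact K \<and> e > 0 \<and>
        (\<forall>h\<in>G. (\<forall>x\<in>K. dist (h x) (g x) < e) \<longrightarrow> h = g))"

definition iso_norm :: "'a::metric_space \<Rightarrow> ('a \<Rightarrow> 'a) \<Rightarrow> real" where
  "iso_norm p g = dist (g p) p"

text \<open>Short basis: a sequence gamma indexed by I, where I = {..<n} (finite collection)
  or I = UNIV (infinite collection); index j here corresponds to gamma_(j+1) in the paper.\<close>
definition short_basis ::
  "('a::metric_space \<Rightarrow> 'a) set \<Rightarrow> 'a \<Rightarrow> (nat \<Rightarrow> ('a \<Rightarrow> 'a)) \<Rightarrow> nat set \<Rightarrow> bool" where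
  "short_basis G p \<gamma> I \<longleftrightarrow>
     (I = UNIV \<or> (\<exists>n. I = {..<n})) \<and>
     (\<forall>j\<in>I. \<gamma> j \<in> G - gen_subgroup (\<gamma> ` {..<j}) \<and>
        (\<forall>h\<in>G - gen_subgroup (\<gamma> ` {..<j}). iso_norm p (\<gamma> j) \<le> iso_norm p h))"

definition mm_space :: "'a::polish_space measure \<Rightarrow> bool" where
  "mm_space M \<longleftrightarrow> sets M = sets borel \<and>
     (\<forall>x r. emeasure M (ball x r) < \<infinity>) \<and>
     (\<forall>x r. r > 0 \<longrightarrow> emeasure M (ball x r) > 0)"

end

theory Submission
  imports Defs
begin

text \<open>For i < j the isometry inv (\<gamma> i) \<circ> \<gamma> j lies outside the subgroup generated by
  \<gamma> 0, ..., \<gamma> (j - 1) (otherwise \<gamma> j would too), so minimality of \<gamma> j gives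
  \<open>\<parallel>\<gamma> j\<parallel> \<le> \<parallel>inv (\<gamma> i) \<circ> \<gamma> j\<parallel> = d(\<gamma> i p, \<gamma> j p)\<close>. Hence the points \<gamma> p of the basis
  elements with norm in [a, b] are a-separated and lie within distance b of p. The balls of
  radius a/2 around them are disjoint and all contained in the 3b-ball around the centre whose
  a/2-ball has the smallest measure, so the doubling condition at that centre bounds their
  number by C(3b, a/2).\<close>

lemma gen_subgroup_comp_mem:
  assumes "g \<in> S" and "h \<in> gen_subgroup S"
  shows "g \<circ> h \<in> gen_subgroup S"
  using assms unfolding gen_subgroup_def iso_subgroup_def by blast

lemma short_basis_norm_le_dist:
  assumes \<Gamma>: "iso_subgroup \<Gamma>"
    and sb: "short_basis \<Gamma> p \<gamma> I"
    and ij: "i \<in> I" "j \<in> I" "i < j"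
  shows "iso_norm p (\<gamma> j) \<le> dist (\<gamma> i p) (\<gamma> j p)"
proof -
  let ?H = "gen_subgroup (\<gamma> ` {..<j})"
  have \<gamma>i: "\<gamma> i \<in> \<Gamma>" and \<gamma>j: "\<gamma> j \<in> \<Gamma> - ?H"
    and minimal: "\<And>h. h \<in> \<Gamma> - ?H \<Longrightarrow> iso_norm p (\<gamma> j) \<le> iso_norm p h"
    using sb ij by (auto simp: short_basis_def)
  have isometric: "\<And>x y. dist (\<gamma> i x) (\<gamma> i y) = dist x y" and surj: "surj (\<gamma> i)"
    using \<Gamma> \<gamma>i by (auto simp: iso_subgroup_def isometry_def)
  define h where "h = inv (\<gamma> i) \<circ> \<gamma> j"
  have "\<gamma> i \<circ> h = \<gamma> j"
    unfolding h_def using surj by (auto simp: surj_f_inv_f)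
  with \<gamma>j ij have "h \<notin> ?H"
    using gen_subgroup_comp_mem[of "\<gamma> i" "\<gamma> ` {..<j}" h] by auto
  moreover have "h \<in> \<Gamma>"
    using \<Gamma> \<gamma>i \<gamma>j unfolding h_def iso_subgroup_def by blast
  ultimately have "iso_norm p (\<gamma> j) \<le> iso_norm p h"
    using minimal by blast
  also have "iso_norm p h = dist (\<gamma> i (inv (\<gamma> i) (\<gamma> j p))) (\<gamma> i p)"
    unfolding iso_norm_def h_def by (simp add: isometric)
  also have "\<dots> = dist (\<gamma> i p) (\<gamma> j p)"
    using surj by (simp add: surj_f_inv_f dist_commute)
  finally show ?thesis .
qed

lemma short_basis_separated:
  assumes "iso_subgroup \<Gamma>" and "short_basis \<Gamma> p \<gamma> I"
    and "i \<in> I" "j \<in> I" "i \<noteq> j"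
    and "a \<le> iso_norm p (\<gamma> i)" "a \<le> iso_norm p (\<gamma> j)"
  shows "a \<le> dist (\<gamma> i p) (\<gamma> j p)"
proof (cases "i < j")
  case True
  then show ?thesis
    using short_basis_norm_le_dist[OF assms(1,2,3,4)] assms(7) by linarith
next
  case False
  then have "j < i" using \<open>i \<noteq> j\<close> by linarith
  then show ?thesis
    using short_basis_norm_le_dist[OF assms(1,2,4,3)] assms(6) by (simp add: dist_commute)
qed

lemma card_le_of_separated_balls:
  fixes M :: "'a::metric_space measure" and x :: "'i \<Rightarrow> 'a"
  assumes balls: "\<And>y s. ball y s \<in> sets M"
    and F: "finite F" and c: "0 \<le> c"
    and separated: "\<And>i j. i \<in> F \<Longrightarrow> j \<in> F \<Longrightarrow> i \<noteq> j \<Longrightarrow> 2 * r \<le> dist (x i) (x j)"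
    and bounded: "\<And>i. i \<in> F \<Longrightarrow> dist (x i) p \<le> b"
    and R: "2 * b + r \<le> R"
    and pos: "\<And>i. i \<in> F \<Longrightarrow> 0 < emeasure M (ball (x i) r)"
    and fin: "\<And>i. i \<in> F \<Longrightarrow> emeasure M (ball (x i) r) < \<infinity>"
    and doubling: "\<And>i. i \<in> F \<Longrightarrow>
        emeasure M (ball (x i) R) \<le> ennreal c * emeasure M (ball (x i) r)"
  shows "real (card F) \<le> c"
proof (cases "F = {}")
  case True
  then show ?thesis using c by simp
next
  case False
  define m where "m i = emeasure M (ball (x i) r)" for i
  define i\<^sub>0 where "i\<^sub>0 = arg_min_on m F"
  have i\<^sub>0: "i\<^sub>0 \<in> F" and m_min: "\<And>i. i \<in> F \<Longrightarrow> m i\<^sub>0 \<le> m i"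
    using arg_min_if_finite[OF F False, of m] unfolding i\<^sub>0_def by (auto simp: not_less)
  have disjoint: "disjoint_family_on (\<lambda>i. ball (x i) r) F"
    unfolding disjoint_family_on_def by (metis separated disjoint_ballI mult_2)
  have covered: "(\<Union>i\<in>F. ball (x i) r) \<subseteq> ball (x i\<^sub>0) R"
  proof
    fix y assume "y \<in> (\<Union>i\<in>F. ball (x i) r)"
    then obtain i where "i \<in> F" "dist (x i) y < r" by auto
    moreover have "dist (x i\<^sub>0) p \<le> b" using bounded i\<^sub>0 .
    ultimately show "y \<in> ball (x i\<^sub>0) R"
      using bounded[of i] dist_triangle[of "x i\<^sub>0" y p] dist_triangle[of p y "x i"] R
      by (simp add: dist_commute)
  qed
  have "of_nat (card F) * m i\<^sub>0 = (\<Sum>i\<in>F. m i\<^sub>0)" by simp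
  also have "\<dots> \<le> (\<Sum>i\<in>F. m i)" using m_min by (rule sum_mono)
  also have "\<dots> = emeasure M (\<Union>i\<in>F. ball (x i) r)"
    unfolding m_def using sum_emeasure[OF _ disjoint F] balls by auto
  also have "\<dots> \<le> emeasure M (ball (x i\<^sub>0) R)"
    using covered balls by (rule emeasure_mono)
  also have "\<dots> \<le> ennreal c * m i\<^sub>0"
    unfolding m_def using doubling i\<^sub>0 .
  finally have "m i\<^sub>0 * of_nat (card F) \<le> m i\<^sub>0 * ennreal c"
    by (simp add: mult.commute)
  then have "of_nat (card F) \<le> ennreal c"
    using pos[OF i\<^sub>0] fin[OF i\<^sub>0] unfolding m_def by (simp add: ennreal_mult_le_mult_iff)
  then show ?thesis
    using c by (metis ennreal_le_iff ennreal_of_nat_eq_real_of_nat)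
qed

lemma finite_and_card_le_if_finite_subsets_card_le:
  fixes c :: real
  assumes "\<And>G. G \<subseteq> F \<Longrightarrow> finite G \<Longrightarrow> real (card G) \<le> c"
  shows "finite F \<and> real (card F) \<le> c"
proof -
  have "c \<ge> 0" using assms[of "{}"] by simp
  have "finite F \<and> card F \<le> nat \<lfloor>c\<rfloor>"
    by (rule finite_if_finite_subsets_card_bdd) (use assms in \<open>meson le_nat_floor\<close>)
  with \<open>c \<ge> 0\<close> show ?thesis by linarith
qed

theorem mainTheorem12:
  fixes M :: "'a::polish_space measure" and p :: 'a
    and C :: "real \<Rightarrow> real \<Rightarrow> real"
    and \<Gamma> :: "('a \<Rightarrow> 'a) set" and \<gamma> :: "nat \<Rightarrow> ('a \<Rightarrow> 'a)" and I :: "nat set"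
    and a b :: real
  assumes mms: "mm_space M"
    and Cpos: "\<And>R r. R > r \<Longrightarrow> r > 0 \<Longrightarrow> C R r > 0"
    and doubling: "\<And>R r x. R > r \<Longrightarrow> r > 0 \<Longrightarrow>
        emeasure M (ball x R) \<le> ennreal (C R r) * emeasure M (ball x r)"
    and ab: "0 < a" "a \<le> b"
    and discr: "discrete_iso_subgroup \<Gamma>"
    and sb: "short_basis \<Gamma> p \<gamma> I"
  shows "finite {g \<in> \<gamma> ` I. a \<le> iso_norm p g \<and> iso_norm p g \<le> b} \<and>
         real (card {g \<in> \<gamma> ` I. a \<le> iso_norm p g \<and> iso_norm p g \<le> b}) \<le> C (3 * b) (a / 2)"
proof -
  define J where "J = {j \<in> I. a \<le> iso_norm p (\<gamma> j) \<and> iso_norm p (\<gamma> j) \<le> b}"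
  have \<Gamma>: "iso_subgroup \<Gamma>" using discr by (simp add: discrete_iso_subgroup_def)
  have "finite J \<and> real (card J) \<le> C (3 * b) (a / 2)"
  proof (rule finite_and_card_le_if_finite_subsets_card_le)
    fix G assume G: "G \<subseteq> J" "finite G"
    have separated: "2 * (a / 2) \<le> dist (\<gamma> i p) (\<gamma> j p)"
      if "i \<in> G" "j \<in> G" "i \<noteq> j" for i j
      using that G short_basis_separated[OF \<Gamma> sb, of i j a] unfolding J_def by auto
    show "real (card G) \<le> C (3 * b) (a / 2)"
      using G separated mms ab Cpos[of "a / 2" "3 * b"] doubling[of "a / 2" "3 * b"]
      by (intro card_le_of_separated_balls[where M = M and x = "\<lambda>j. \<gamma> j p" and p = p
          and b = b and r = "a / 2" and R = "3 * b"])
        (auto simp: mm_space_def J_def iso_norm_def)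
  qed
  moreover have "{g \<in> \<gamma> ` I. a \<le> iso_norm p g \<and> iso_norm p g \<le> b} = \<gamma> ` J"
    unfolding J_def by auto
  ultimately show ?thesis
    using card_image_le[of J \<gamma>] by (simp add: order_trans)
qed

end
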